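(* Let $d\geq 1$ be an integer and let $G$ be a connected bipartite graph with $|V(G)|\geq 2d+2$ and $\alpha(G)\geq d+1$. Then there exists a set $S\subseteq E(G)$ with $|S|\leq 2d+1$ such that $\alpha(G/S)\leq \alpha(G)-d$. In other words, $(G,2d+1)$ is a yes-instance of $d$-Contraction Blocker$(\alpha)$.
   Context: $\alpha(G)$ denotes the independence number of $G$, i.e. the maximum size of a set of pairwise non-adjacent vertices. For $S\subseteq E(G)$, $G/S$ is the graph obtained from $G$ by contracting every edge of $S$. Equivalently, the vertices of $G/S$ correspond to the connected components of the spanning subgraph $(V(G),S)$, and two such vertices are adjacent iff some vertex of the one component is adjacent in $G$ to some vertex of the other. $d$-Contraction Blocker$(\pi)$ (for fixed $d\ge 1$) takes a graph $G$ and an integer $k$ and asks whether there is $S\subseteq E(G)$ with $|S|\le k$ and $\pi(G/S)\le \pi(G)-d$. *)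

theory Defs
  imports Main
begin

definition graph :: "'a set \<Rightarrow> 'a set set \<Rightarrow> bool" where
  "graph V E \<longleftrightarrow> finite V \<and> (\<forall>e\<in>E. e \<subseteq> V \<and> card e = 2)"

definition adj_rel :: "'a set set \<Rightarrow> ('a \<times> 'a) set" where
  "adj_rel E = {(u, v). {u, v} \<in> E}"

definition connected_graph :: "'a set \<Rightarrow> 'a set set \<Rightarrow> bool" where
  "connected_graph V E \<longleftrightarrow> (\<forall>u\<in>V. \<forall>v\<in>V. (u, v) \<in> (adj_rel E)\<^sup>*)"

definition bipartite :: "'a set \<Rightarrow> 'a set set \<Rightarrow> bool" where
  "bipartite V E \<longleftrightarrow> (\<exists>A B. A \<union> B = V \<and> A \<inter> B = {} \<and>
      (\<forall>u v. {u, v} \<in> E \<longrightarrow> (u \<in> A \<and> v \<in> B) \<or> (u \<in> B \<and> v \<in> A)))"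

definition independent_set :: "'a set \<Rightarrow> 'a set set \<Rightarrow> 'a set \<Rightarrow> bool" where
  "independent_set V E I \<longleftrightarrow> I \<subseteq> V \<and> (\<forall>u\<in>I. \<forall>v\<in>I. {u, v} \<notin> E)"

definition alpha :: "'a set \<Rightarrow> 'a set set \<Rightarrow> nat" where
  "alpha V E = Max {card I | I. independent_set V E I}"

definition comp_rel :: "'a set \<Rightarrow> 'a set set \<Rightarrow> ('a \<times> 'a) set" where
  "comp_rel V S = Restr ((adj_rel S)\<^sup>*) V"

(* G/S: vertices are the components of (V,S) *)
definition contr_V :: "'a set \<Rightarrow> 'a set set \<Rightarrow> 'a set set" where
  "contr_V V S = V // comp_rel V S"

definition contr_E :: "'a set \<Rightarrow> 'a set set \<Rightarrow> 'a set set \<Rightarrow> 'a set set set" where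
  "contr_E V E S = {{X, Y} | X Y. X \<in> contr_V V S \<and> Y \<in> contr_V V S \<and> X \<noteq> Y \<and>
      (\<exists>x\<in>X. \<exists>y\<in>Y. {x, y} \<in> E)}"

end

theory Submission
  imports Defs
begin

text \<open>
  Grow a connected vertex set X one neighbour at a time. In a bipartite graph, for every vertex v
  of the remaining graph, deleting v or deleting v together with some neighbour u lowers the
  independence number (otherwise a maximum independent set avoiding v and all its neighbours
  exists, and v could be added to it). Hence X can be grown, keeping it connected by |X| - 1
  edges S, so that \<open>\<alpha>(G - X) \<le> \<alpha>(G) - |X|/2\<close>. Stop at |X| \<ge> 2d + 1. In G/S the set X becomes
  one vertex: an independent set avoiding it is independent in G - X, and one containing it
  extends, by a colour class of X of size at least d + 1, to an independent set of G.
\<close>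

subsection \<open>Independence number\<close>

lemma finite_independent_set_cards:
  assumes "finite W"
  shows "finite {card I | I. independent_set W E I}"
proof -
  have "{card I | I. independent_set W E I} \<subseteq> card ` Pow W"
    by (auto simp: independent_set_def)
  then show ?thesis
    using assms finite_subset by blast
qed

lemma finite_independent_set: "finite W \<Longrightarrow> independent_set W E I \<Longrightarrow> finite I"
  by (auto simp: independent_set_def intro: finite_subset)

lemma card_le_alpha: "finite W \<Longrightarrow> independent_set W E I \<Longrightarrow> card I \<le> alpha W E"
  unfolding alpha_def using finite_independent_set_cards by (intro Max_ge) auto

lemma maximum_independent_set_exists:
  assumes "finite W"
  obtains I where "independent_set W E I" "card I = alpha W E"
proof -
  have "independent_set W E {}"
    by (simp add: independent_set_def)
  then have "{card I | I. independent_set W E I} \<noteq> {}"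
    by blast
  from Max_in[OF finite_independent_set_cards[OF assms] this] show ?thesis
    using that unfolding alpha_def by auto
qed

lemma alpha_le:
  "finite W \<Longrightarrow> (\<And>I. independent_set W E I \<Longrightarrow> card I \<le> k) \<Longrightarrow> alpha W E \<le> k"
  by (metis maximum_independent_set_exists)

lemma independent_set_mono: "independent_set W E I \<Longrightarrow> W \<subseteq> W' \<Longrightarrow> independent_set W' E I"
  by (auto simp: independent_set_def)

lemma alpha_mono:
  assumes "finite W'" "W \<subseteq> W'"
  shows "alpha W E \<le> alpha W' E"
  using assms finite_subset[OF assms(2,1)]
  by (metis card_le_alpha independent_set_mono maximum_independent_set_exists)

subsection \<open>Maximum independent sets in bipartite graphs\<close>

definition bipartite_side :: "'a set set \<Rightarrow> 'a set \<Rightarrow> bool" where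
  "bipartite_side E C \<longleftrightarrow> (\<forall>x y. {x, y} \<in> E \<longrightarrow> (x \<in> C \<longleftrightarrow> y \<notin> C))"

lemma bipartite_side_Compl: "bipartite_side E C \<Longrightarrow> bipartite_side E (- C)"
  by (auto simp: bipartite_side_def)

lemma bipartite_imp_side:
  assumes "bipartite V E"
  obtains C where "bipartite_side E C"
proof -
  obtain A B where "A \<inter> B = {}" "\<forall>u v. {u, v} \<in> E \<longrightarrow> u \<in> A \<and> v \<in> B \<or> u \<in> B \<and> v \<in> A"
    using assms unfolding bipartite_def by blast
  then have "bipartite_side E A"
    unfolding bipartite_side_def by blast
  then show ?thesis
    using that by blast
qed

lemma bipartite_side_independent_set:
  "bipartite_side E C \<Longrightarrow> X \<subseteq> V \<Longrightarrow> independent_set V E (X \<inter> C)"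
  by (auto simp: bipartite_side_def independent_set_def)

lemma bipartite_side_no_loop: "bipartite_side E C \<Longrightarrow> {v} \<notin> E"
  unfolding bipartite_side_def by (metis insert_absorb2)

text \<open>
  The two sets \<open>P\<close> (taking I \<union> J on C and I \<inter> J off C) and its mirror image
  \<open>Q\<close> are independent and together use every vertex of I and J exactly as often as
  I and J do, so both are maximum when I and J are.
\<close>
lemma bipartite_side_exchange:
  assumes side: "bipartite_side E C" and W: "finite W"
    and I: "independent_set W E I" "card I = alpha W E"
    and J: "independent_set W E J" "card J = alpha W E"
  defines "P \<equiv> (C \<inter> (I \<union> J)) \<union> ((I \<inter> J) - C)"
  shows "independent_set W E P" "card P = alpha W E"
proof -
  define Q where "Q = ((I \<union> J) - C) \<union> (C \<inter> I \<inter> J)"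
  show P: "independent_set W E P"
    using side I(1) J(1) unfolding P_def bipartite_side_def independent_set_def by blast
  have Q: "independent_set W E Q"
    using side I(1) J(1) unfolding Q_def bipartite_side_def independent_set_def by blast
  have fin: "finite I" "finite J"
    using W I(1) J(1) finite_independent_set by blast+
  have "card P + card Q = card (P \<union> Q) + card (P \<inter> Q)"
    using fin by (intro card_Un_Int) (auto simp: P_def Q_def)
  also have "P \<union> Q = I \<union> J" "P \<inter> Q = I \<inter> J"
    unfolding P_def Q_def by auto
  then have "card (P \<union> Q) + card (P \<inter> Q) = card I + card J"
    using card_Un_Int[OF fin] by simp
  finally show "card P = alpha W E"
    using card_le_alpha[OF W P] card_le_alpha[OF W Q] I(2) J(2) by linarith
qed

lemma maximum_independent_set_avoiding_neighbours:
  assumes W: "finite W" and side: "bipartite_side E C" and "v \<in> C"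
    and drop_v: "alpha W E \<le> alpha (W - {v}) E"
    and drop_vu: "\<And>u. u \<in> W \<Longrightarrow> {v, u} \<in> E \<Longrightarrow> alpha W E \<le> alpha (W - {v, u}) E"
    and "finite U" "U \<subseteq> {u \<in> W. {v, u} \<in> E}"
  shows "\<exists>I. independent_set W E I \<and> card I = alpha W E \<and> v \<notin> I \<and> I \<inter> U = {}"
  using \<open>finite U\<close> \<open>U \<subseteq> _\<close>
proof (induction U rule: finite_induct)
  case empty
  obtain I where I: "independent_set (W - {v}) E I" "card I = alpha (W - {v}) E"
    using maximum_independent_set_exists W by (metis finite_Diff)
  then have "independent_set W E I"
    using independent_set_mono by blast
  moreover from this have "card I = alpha W E"
    using card_le_alpha[OF W] I(2) drop_v by (metis le_antisym)
  moreover have "v \<notin> I"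
    using I(1) by (auto simp: independent_set_def)
  ultimately show ?case
    by blast
next
  case (insert u U)
  then obtain I where I: "independent_set W E I" "card I = alpha W E" "v \<notin> I" "I \<inter> U = {}"
    by auto
  have uW: "u \<in> W" and vu: "{v, u} \<in> E"
    using insert.prems by auto
  obtain J where J: "independent_set (W - {v, u}) E J" "card J = alpha (W - {v, u}) E"
    using maximum_independent_set_exists W by (metis finite_Diff)
  have J': "independent_set W E J" "card J = alpha W E"
    using J independent_set_mono card_le_alpha[OF W] drop_vu[OF uW vu]
    by (metis Diff_subset le_antisym)+
  have "v \<notin> J" "u \<notin> J"
    using J(1) by (auto simp: independent_set_def)
  moreover have "u \<notin> C" "U \<inter> C = {}"
    using side vu insert.prems \<open>v \<in> C\<close> unfolding bipartite_side_def by blast+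
  ultimately show ?case
    using bipartite_side_exchange[OF side W I(1,2) J'] I(3,4) by blast
qed

lemma alpha_drops_at_vertex_or_edge:
  assumes W: "finite W" and side: "bipartite_side E C" and vW: "v \<in> W"
  shows "alpha (W - {v}) E < alpha W E \<or> (\<exists>u\<in>W. {v, u} \<in> E \<and> alpha (W - {v, u}) E < alpha W E)"
proof (rule ccontr)
  assume "\<not> ?thesis"
  then have drop_v: "alpha W E \<le> alpha (W - {v}) E"
    and drop_vu: "\<And>u. u \<in> W \<Longrightarrow> {v, u} \<in> E \<Longrightarrow> alpha W E \<le> alpha (W - {v, u}) E"
    by auto
  obtain C' where side': "bipartite_side E C'" and "v \<in> C'"
    using side bipartite_side_Compl by (cases "v \<in> C") blast+
  define N where "N = {u \<in> W. {v, u} \<in> E}"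
  have "finite N"
    using W unfolding N_def by simp
  then obtain I where I: "independent_set W E I" "card I = alpha W E" "v \<notin> I" "I \<inter> N = {}"
    using maximum_independent_set_avoiding_neighbours[OF W side' \<open>v \<in> C'\<close> drop_v drop_vu]
    unfolding N_def by blast
  have "independent_set W E (insert v I)"
    using I(1,4) vW bipartite_side_no_loop[OF side]
    unfolding independent_set_def N_def by (auto simp: insert_commute)
  then have "card (insert v I) \<le> alpha W E"
    by (rule card_le_alpha[OF W])
  then show False
    using I(2,3) finite_independent_set[OF W I(1)] by simp
qed

subsection \<open>Connected vertex sets\<close>

definition connects :: "'a set set \<Rightarrow> 'a set \<Rightarrow> bool" where
  "connects S X \<longleftrightarrow> (\<forall>e\<in>S. e \<subseteq> X) \<and> (\<forall>x\<in>X. \<forall>y\<in>X. (x, y) \<in> (adj_rel S)\<^sup>*)"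

lemma connects_singleton: "connects {} {v}"
  by (simp add: connects_def)

lemma connects_insert_edge:
  assumes "connects S X" "x \<in> X"
  shows "connects (insert {x, v} S) (insert v X)"
proof -
  let ?R = "adj_rel (insert {x, v} S)"
  have "(a, b) \<in> ?R\<^sup>*" if "a \<in> X" "b \<in> X" for a b
    using assms that rtrancl_mono[of "adj_rel S" ?R]
    unfolding connects_def adj_rel_def by blast
  moreover have "(x, v) \<in> ?R\<^sup>*" "(v, x) \<in> ?R\<^sup>*"
    by (auto simp: adj_rel_def insert_commute)
  ultimately have "(a, b) \<in> ?R\<^sup>*" if "a \<in> insert v X" "b \<in> insert v X" for a b
    using that \<open>x \<in> X\<close> by (auto intro: rtrancl_trans)
  then show ?thesis
    using assms unfolding connects_def by blast
qed

lemma rtrancl_exits_set: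
  "(a, b) \<in> R\<^sup>* \<Longrightarrow> a \<in> X \<Longrightarrow> b \<notin> X \<Longrightarrow> \<exists>x y. (x, y) \<in> R \<and> x \<in> X \<and> y \<notin> X"
  by (induction rule: rtrancl_induct) auto

lemma rtrancl_adj_rel_within:
  "(a, b) \<in> (adj_rel S)\<^sup>* \<Longrightarrow> \<forall>e\<in>S. e \<subseteq> X \<Longrightarrow> a = b \<or> a \<in> X \<and> b \<in> X"
  by (induction rule: rtrancl_induct) (auto simp: adj_rel_def)

lemma graph_finite_edges: "graph V E \<Longrightarrow> finite E"
  unfolding graph_def by (metis Pow_iff finite_Pow_iff finite_subset subsetI)

lemma extend_connected_set:
  assumes G: "graph V E" and conn: "connected_graph V E"
    and X: "X \<subseteq> V" "X \<noteq> V" and S: "S \<subseteq> E" "connects S X" "card S \<le> card X - 1"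
  obtains v S' where "v \<in> V - X" "S' \<subseteq> E" "connects S' (insert v X)" "card S' \<le> card X"
proof (cases "X = {}")
  case True
  then obtain v where "v \<in> V - X"
    using X by blast
  then show ?thesis
    using that[of v "{}"] True by (simp add: connects_singleton)
next
  case False
  then obtain x0 y0 where "x0 \<in> X" "y0 \<in> V - X"
    using X by blast
  then have "(x0, y0) \<in> (adj_rel E)\<^sup>*"
    using conn X(1) unfolding connected_graph_def by blast
  from rtrancl_exits_set[OF this \<open>x0 \<in> X\<close>] \<open>y0 \<in> V - X\<close>
  obtain x v where "(x, v) \<in> adj_rel E" "x \<in> X" "v \<notin> X"
    by blast
  then have xv: "{x, v} \<in> E" "x \<in> X" "v \<notin> X"
    by (simp_all add: adj_rel_def)
  then have "v \<in> V"
    using G unfolding graph_def by blast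
  have "card (insert {x, v} S) \<le> card S + 1"
    using finite_subset[OF S(1) graph_finite_edges[OF G]] by (simp add: card_insert_if)
  moreover have "0 < card X"
    using False X(1) G finite_subset unfolding graph_def by (auto simp: card_gt_0_iff)
  ultimately have "card (insert {x, v} S) \<le> card X"
    using S(3) by linarith
  then show ?thesis
    using that[of v "insert {x, v} S"] connects_insert_edge[OF S(2) xv(2)] xv S(1) \<open>v \<in> V\<close>
    by blast
qed

lemma extend_connected_set_alpha_drop:
  assumes G: "graph V E" and conn: "connected_graph V E" and side: "bipartite_side E C"
    and X: "X \<subseteq> V" "X \<noteq> V" and S: "S \<subseteq> E" "connects S X" "card S \<le> card X - 1"
  obtains X' S' where "X' \<subseteq> V" "S' \<subseteq> E" "connects S' X'" "card S' \<le> card X' - 1"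
    "card X < card X'" "card X' \<le> card X + 2" "alpha (V - X') E < alpha (V - X) E"
proof -
  have fV: "finite V"
    using G by (simp add: graph_def)
  obtain v S1 where v: "v \<in> V - X" and S1: "S1 \<subseteq> E" "connects S1 (insert v X)" "card S1 \<le> card X"
    using extend_connected_set[OF G conn X S] .
  have cX1: "card (insert v X) = card X + 1"
    using v finite_subset[OF X(1) fV] by simp
  have "V - insert v X = (V - X) - {v}" "V - insert u (insert v X) = (V - X) - {v, u}" for u
    by auto
  with alpha_drops_at_vertex_or_edge[of "V - X" E C v] fV side v
  consider "alpha (V - insert v X) E < alpha (V - X) E"
    | u where "u \<in> V - X" "{v, u} \<in> E" "alpha (V - insert u (insert v X)) E < alpha (V - X) E"
    by auto
  then show ?thesis
  proof cases
    case 1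
    then show ?thesis
      using that[of "insert v X" S1] v X(1) S1 cX1 by auto
  next
    case (2 u)
    have "u \<noteq> v"
      using 2(2) bipartite_side_no_loop[OF side] by auto
    then have "card (insert u (insert v X)) = card X + 2"
      using 2(1) cX1 finite_subset[OF X(1) fV] by simp
    moreover have "card (insert {v, u} S1) \<le> card S1 + 1"
      using finite_subset[OF S1(1) graph_finite_edges[OF G]] by (simp add: card_insert_if)
    moreover have "connects (insert {v, u} S1) (insert u (insert v X))"
      using connects_insert_edge[OF S1(2)] by simp
    ultimately show ?thesis
      using that[of "insert u (insert v X)" "insert {v, u} S1"] 2 v X(1) S1 by auto
  qed
qed

text \<open>Each step adds at most two vertices and lowers \<open>\<alpha>(G - X)\<close> by at least one.\<close>
lemma exists_connected_set_alpha_drop: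
  assumes G: "graph V E" and conn: "connected_graph V E" and side: "bipartite_side E C"
    and "m \<le> card V"
  shows "\<exists>X S. X \<subseteq> V \<and> S \<subseteq> E \<and> connects S X \<and> card S \<le> card X - 1 \<and>
    m \<le> card X \<and> card X \<le> m + 1 \<and> card X \<le> 2 * (alpha V E - alpha (V - X) E)"
  using \<open>m \<le> card V\<close>
proof (induction m)
  case 0
  show ?case
    by (intro exI[of _ "{}"]) (simp add: connects_def)
next
  case (Suc m)
  then obtain X S where X: "X \<subseteq> V" "S \<subseteq> E" "connects S X" "card S \<le> card X - 1"
    "m \<le> card X" "card X \<le> m + 1" "card X \<le> 2 * (alpha V E - alpha (V - X) E)"
    by auto
  show ?case
  proof (cases "Suc m \<le> card X")
    case True
    then show ?thesis
      using X by (intro exI[of _ X] exI[of _ S]) auto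
  next
    case False
    then have "X \<noteq> V"
      using Suc.prems X(5) by auto
    then obtain X' S' where X': "X' \<subseteq> V" "S' \<subseteq> E" "connects S' X'" "card S' \<le> card X' - 1"
      "card X < card X'" "card X' \<le> card X + 2" "alpha (V - X') E < alpha (V - X) E"
      using extend_connected_set_alpha_drop[OF G conn side X(1) _ X(2-4)] by blast
    moreover have "alpha (V - X) E \<le> alpha V E"
      using G by (intro alpha_mono) (auto simp: graph_def)
    ultimately show ?thesis
      using False X(5-7) by (intro exI[of _ X'] exI[of _ S']) auto
  qed
qed

subsection \<open>Contracting a connected vertex set\<close>

lemma contr_V_connects:
  assumes "X \<subseteq> V" "X \<noteq> {}" "connects S X"
  shows "contr_V V S = insert X ((\<lambda>y. {y}) ` (V - X))"
proof -
  have edges: "\<forall>e\<in>S. e \<subseteq> X"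
    using assms(3) by (simp add: connects_def)
  have class_X: "comp_rel V S `` {x} = X" if "x \<in> X" for x
    using that assms rtrancl_adj_rel_within[OF _ edges, of x]
    unfolding comp_rel_def connects_def by auto
  have class_single: "comp_rel V S `` {y} = {y}" if "y \<in> V - X" for y
    using that rtrancl_adj_rel_within[OF _ edges, of y] unfolding comp_rel_def by auto
  have "(\<Union>x\<in>V. {comp_rel V S `` {x}}) = insert X ((\<lambda>y. {y}) ` (V - X))"
  proof (intro equalityI subsetI)
    fix Z assume "Z \<in> (\<Union>x\<in>V. {comp_rel V S `` {x}})"
    then obtain x where "x \<in> V" "Z = comp_rel V S `` {x}"
      by blast
    then show "Z \<in> insert X ((\<lambda>y. {y}) ` (V - X))"
      using class_X class_single by (cases "x \<in> X") auto
  next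
    fix Z assume "Z \<in> insert X ((\<lambda>y. {y}) ` (V - X))"
    moreover obtain x0 where "x0 \<in> X"
      using assms(2) by blast
    ultimately show "Z \<in> (\<Union>x\<in>V. {comp_rel V S `` {x}})"
      using class_X class_single assms(1) by blast
  qed
  then show ?thesis
    unfolding contr_V_def quotient_def .
qed

lemma alpha_contr_le:
  assumes G: "graph V E" and X: "X \<subseteq> V" "X \<noteq> {}" "connects S X"
    and Z: "Z \<subseteq> X" "independent_set V E Z"
  shows "alpha (contr_V V S) (contr_E V E S) \<le> max (alpha (V - X) E) (alpha V E + 1 - card Z)"
proof -
  have fV: "finite V" and no_loop: "\<And>v. {v} \<notin> E"
    using G unfolding graph_def by fastforce+
  have cV: "contr_V V S = insert X ((\<lambda>y. {y}) ` (V - X))"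
    by (rule contr_V_connects[OF X])
  have fC: "finite (contr_V V S)"
    using cV fV by simp
  have contr_edge: "{P, Q} \<in> contr_E V E S"
    if "P \<in> contr_V V S" "Q \<in> contr_V V S" "P \<noteq> Q" "x \<in> P" "y \<in> Q" "{x, y} \<in> E" for P Q x y
    unfolding contr_E_def using that by blast
  have "card J \<le> max (alpha (V - X) E) (alpha V E + 1 - card Z)"
    if J: "independent_set (contr_V V S) (contr_E V E S) J" for J
  proof -
    define Y where "Y = {y \<in> V - X. {y} \<in> J}"
    have JY: "J - {X} = (\<lambda>y. {y}) ` Y" and cY: "card ((\<lambda>y. {y}) ` Y) = card Y"
      using J cV unfolding Y_def independent_set_def by (auto intro: card_image simp: inj_on_def)
    have "{u, v} \<notin> E" if "u \<in> Y" "v \<in> Y" for u v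
    proof
      assume uv: "{u, v} \<in> E"
      then have "{u} \<noteq> {v}"
        using no_loop by auto
      then have "{{u}, {v}} \<in> contr_E V E S"
        using contr_edge[of "{u}" "{v}" u v] uv that cV unfolding Y_def by auto
      then show False
        using J that unfolding Y_def independent_set_def by auto
    qed
    then have Y: "independent_set (V - X) E Y"
      unfolding Y_def independent_set_def by auto
    show ?thesis
    proof (cases "X \<in> J")
      case False
      then have "card J = card Y"
        using JY cY by (metis Diff_empty Diff_insert0)
      then show ?thesis
        using card_le_alpha[OF _ Y] fV by simp
    next
      case True
      have "finite J"
        using J fC finite_subset unfolding independent_set_def by blast
      then have cJ: "card J = card Y + 1"
        using card.remove[OF _ True] JY cY by simp
      have "{y, z} \<notin> E \<and> {z, y} \<notin> E" if "y \<in> Y" "z \<in> Z" for y z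
        using that J True Z(1) cV contr_edge[of "{y}" X y z]
        unfolding Y_def independent_set_def by (auto simp: insert_commute)
      then have "independent_set V E (Y \<union> Z)"
        using Y Z X(1) unfolding independent_set_def by blast
      moreover have "card (Y \<union> Z) = card Y + card Z"
        using Y_def Z(1) fV finite_subset[OF Z(1)] finite_subset[OF X(1)]
        by (intro card_Un_disjoint) auto
      ultimately show ?thesis
        using card_le_alpha[OF fV] cJ by fastforce
    qed
  qed
  then show ?thesis
    using alpha_le[OF fC] by blast
qed

theorem mainTheorem1:
  fixes V :: "'a set" and E :: "'a set set" and d :: nat
  assumes "d \<ge> 1"
    and "graph V E"
    and "connected_graph V E"
    and "bipartite V E"
    and "card V \<ge> 2 * d + 2"
    and "alpha V E \<ge> d + 1"
  shows "\<exists>S \<subseteq> E. card S \<le> 2 * d + 1 \<and>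
           alpha (contr_V V S) (contr_E V E S) \<le> alpha V E - d"
proof -
  obtain C where side: "bipartite_side E C"
    using assms(4) by (rule bipartite_imp_side)
  obtain X S where X: "X \<subseteq> V" "S \<subseteq> E" "connects S X" "card S \<le> card X - 1"
    "2 * d + 1 \<le> card X" "card X \<le> 2 * d + 2" "card X \<le> 2 * (alpha V E - alpha (V - X) E)"
    using exists_connected_set_alpha_drop[OF assms(2,3) side, of "2 * d + 1"] assms(5) by auto
  have fX: "finite X"
    using X(1) assms(2) finite_subset unfolding graph_def by blast
  have "card (X \<inter> C) + card (X \<inter> - C) = card X"
    using card_Int_Diff[OF fX, of C] by (simp add: Diff_eq)
  then consider "d + 1 \<le> card (X \<inter> C)" | "d + 1 \<le> card (X \<inter> - C)"
    using X(5) by linarith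
  then obtain Z where Z: "Z \<subseteq> X" "independent_set V E Z" "d + 1 \<le> card Z"
    using bipartite_side_independent_set[OF side X(1)]
      bipartite_side_independent_set[OF bipartite_side_Compl[OF side] X(1)]
    by (cases) (meson Int_lower1)+
  have "alpha (contr_V V S) (contr_E V E S) \<le> max (alpha (V - X) E) (alpha V E + 1 - card Z)"
    using alpha_contr_le[OF assms(2) X(1) _ X(3) Z(1,2)] X(5) by (cases "X = {}") auto
  moreover have "card S \<le> 2 * d + 1"
    using X(4,6) by linarith
  ultimately show ?thesis
    using X(2,5,7) Z(3) by (intro exI[of _ S]) auto
qed

end
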